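(* Let $\Omega\subset\mathbb C$ be a Jordan domain and $A\subset\mathop{\rm clos}\Omega$ a closed connected set such that $\Gamma=A\cap\partial\Omega$ is a simple arc with endpoints $P$ and $Q$. Assume that every point of $\Gamma_o=\Gamma\setminus\{P,Q\}$ has a neighborhood that does not intersect $\mathop{\rm clos}\Omega\setminus A$. Then $\partial A\cap\Omega$ has a connected component whose closure contains both $P$ and $Q$. *)

theory Defs
  imports "HOL-Analysis.Analysis"
begin

definition jordan_domain :: "complex set \<Rightarrow> bool" where
  "jordan_domain \<Omega> \<longleftrightarrow>
     (\<exists>g. simple_path g \<and> pathfinish g = pathstart g \<and> \<Omega> = inside (path_image g))"

end

theory Submission
  imports Defs
begin

text \<open>Write \<open>S = frontier A \<inter> \<Omega>\<close>. Near the open arc the domain lies inside \<open>A\<close>, so \<open>S\<close> accumulates on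
  \<open>frontier \<Omega>\<close> only at \<open>P\<close> and \<open>Q\<close> and \<open>S \<union> {P, Q}\<close> is compact. Take \<open>a \<in> A \<inter> \<Omega>\<close> near the open arc
  and \<open>b \<in> \<Omega> - A\<close> near a point of \<open>frontier \<Omega> - A\<close> (which exists since a Jordan curve is not an arc).
  Going around through the exterior of the curve, no subset of \<open>S \<union> {P, Q}\<close> separates \<open>a\<close> from \<open>b\<close>, and
  the exterior itself does not either; but their union does, since inside \<open>\<Omega>\<close> every connected set from \<open>a\<close>
  to \<open>b\<close> meets \<open>frontier A\<close>. By Janiszewski's theorem \<open>S \<union> {P, Q}\<close> contains a continuum through \<open>P\<close> and
  \<open>Q\<close>. A subcontinuum irreducible between \<open>P\<close> and \<open>Q\<close> stays connected when \<open>P\<close> and \<open>Q\<close> are removed, so it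
  lies in a single component of \<open>S\<close>, whose closure then contains \<open>P\<close> and \<open>Q\<close>.\<close>

lemma compact_separation_of_points:
  fixes K :: "'a::metric_space set"
  assumes "compact K"
    and no_join: "\<And>C. connected C \<Longrightarrow> C \<subseteq> K \<Longrightarrow> P \<in> C \<Longrightarrow> Q \<in> C \<Longrightarrow> False"
  obtains K1 K2 where "closed K1" "closed K2" "K = K1 \<union> K2" "K1 \<inter> K2 = {}" "P \<notin> K2" "Q \<notin> K1"
proof -
  have "separated_between (top_of_set K) (K \<inter> {P}) (K \<inter> {Q})"
  proof (rule cut_wire_fence_theorem)
    show "compact_space (top_of_set K)"
      by (simp add: assms(1) compact_space_subtopology)
    show "Hausdorff_space (top_of_set K)"
      by (simp add: Hausdorff_space_subtopology)
    show "closedin (top_of_set K) (K \<inter> {P})" "closedin (top_of_set K) (K \<inter> {Q})"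
      by (auto intro: closedin_closed_Int)
    fix C assume "connectedin (top_of_set K) C"
    then show "disjnt C (K \<inter> {P}) \<or> disjnt C (K \<inter> {Q})"
      using no_join by (auto simp: connectedin_subtopology disjnt_def)
  qed
  then obtain U where U: "closedin (top_of_set K) U" "openin (top_of_set K) U"
    "K \<inter> {P} \<subseteq> U" "K \<inter> {Q} \<subseteq> K - U"
    unfolding separated_between by auto
  have "closed K" by (simp add: assms(1) compact_imp_closed)
  have "closedin (top_of_set K) (K - U)"
    using closedin_diff[OF closedin_topspace U(2)] by simp
  then have "closed (K - U)" "closed U"
    using U(1) \<open>closed K\<close> closedin_closed_trans by blast+
  moreover have "U \<subseteq> K" using U(1) closedin_imp_subset by blast
  ultimately show ?thesis
    using U(3,4) by (intro that[of U "K - U"]) auto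
qed

definition irreducible_continuum :: "'a::topological_space set \<Rightarrow> 'a \<Rightarrow> 'a \<Rightarrow> bool" where
  "irreducible_continuum M P Q \<longleftrightarrow> compact M \<and> connected M \<and> P \<in> M \<and> Q \<in> M \<and>
     (\<forall>M'. compact M' \<and> connected M' \<and> M' \<subseteq> M \<and> P \<in> M' \<and> Q \<in> M' \<longrightarrow> M' = M)"

text \<open>Zorn's lemma on the continua in \<open>Y\<close> through \<open>P\<close> and \<open>Q\<close>, ordered by reverse inclusion: the
  intersection of a chain of continua is a continuum.\<close>
lemma irreducible_continuum_exists:
  fixes Y C :: "'a::euclidean_space set"
  assumes "compact Y" "connected C" "C \<subseteq> Y" "P \<in> C" "Q \<in> C"
  obtains M where "M \<subseteq> Y" "irreducible_continuum M P Q"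
proof -
  define F where "F = {M. compact M \<and> connected M \<and> M \<subseteq> Y \<and> P \<in> M \<and> Q \<in> M}"
  have "closure C \<in> F"
    using assms unfolding F_def
    by (auto simp: compact_imp_closed closure_minimal connected_imp_connected_closure
        intro: compact_closure[THEN iffD2] bounded_subset compact_imp_bounded closure_subset[THEN subsetD])
  have "\<exists>M\<in>uminus ` F. \<forall>X\<in>uminus ` F. M \<subseteq> X \<longrightarrow> X = M"
  proof (rule subset_Zorn)
    fix \<C> assume chain: "subset.chain (uminus ` F) \<C>"
    show "\<exists>U\<in>uminus ` F. \<forall>X\<in>\<C>. X \<subseteq> U"
    proof (cases "\<C> = {}")
      case True
      then show ?thesis using \<open>closure C \<in> F\<close> by blast
    next
      case False
      then obtain X0 where "X0 \<in> \<C>" by blast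
      define G where "G = uminus ` \<C>"
      have "G \<subseteq> F" "-X0 \<in> G"
        using chain \<open>X0 \<in> \<C>\<close> unfolding G_def by (auto simp: subset_chain_def)
      then have "compact (-X0)" "\<And>T. T \<in> G \<Longrightarrow> closed T \<and> connected T"
        unfolding F_def by (auto simp: compact_imp_closed)
      moreover have "\<And>S T. S \<in> G \<and> T \<in> G \<Longrightarrow> S \<subseteq> T \<or> T \<subseteq> S"
        using chain unfolding G_def subset_chain_def by blast
      ultimately have "connected (\<Inter>G)" "closed (\<Inter>G)"
        using connected_chain_gen[OF \<open>-X0 \<in> G\<close>] by auto
      moreover have "\<Inter>G = (-X0) \<inter> \<Inter>G" using \<open>-X0 \<in> G\<close> by blast
      ultimately have "compact (\<Inter>G)"
        using compact_Int_closed[OF \<open>compact (-X0)\<close>] by metis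
      then have "\<Inter>G \<in> F"
        using \<open>connected (\<Inter>G)\<close> \<open>G \<subseteq> F\<close> \<open>-X0 \<in> G\<close> unfolding F_def by blast
      moreover have "\<Union>\<C> = - \<Inter>G" unfolding G_def by auto
      ultimately show ?thesis by (metis Union_upper image_eqI)
    qed
  qed
  then obtain M where "M \<in> F" and max: "\<And>X. X \<in> F \<Longrightarrow> -M \<subseteq> -X \<Longrightarrow> -X = -M"
    by auto
  show ?thesis
  proof (rule that)
    show "M \<subseteq> Y" using \<open>M \<in> F\<close> unfolding F_def by blast
    then show "irreducible_continuum M P Q"
      using \<open>M \<in> F\<close> max unfolding F_def irreducible_continuum_def by blast
  qed
qed

lemma irreducible_continuum_split_proper_closed:
  fixes M :: "'a::metric_space set"
  assumes "irreducible_continuum M P Q" "closed K" "K \<subseteq> M" "K \<noteq> M"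
  obtains K1 K2 where "closed K1" "closed K2" "K = K1 \<union> K2" "K1 \<inter> K2 = {}" "P \<notin> K2" "Q \<notin> K1"
proof (rule compact_separation_of_points)
  show "compact K"
    using assms compact_Int_closed[of M K] by (simp add: irreducible_continuum_def Int_absorb1)
  fix C assume "connected C" "C \<subseteq> K" "P \<in> C" "Q \<in> C"
  then have "closure C \<subseteq> K" "connected (closure C)"
    using \<open>closed K\<close> closure_minimal connected_imp_connected_closure by blast+
  moreover have "compact (closure C)"
    using \<open>compact K\<close> \<open>closure C \<subseteq> K\<close> compact_Int_closed[of K "closure C"] by (simp add: Int_absorb1)
  moreover have "P \<in> closure C" "Q \<in> closure C"
    using \<open>P \<in> C\<close> \<open>Q \<in> C\<close> closure_subset by blast+
  ultimately have "closure C = M"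
    using assms(1,3) unfolding irreducible_continuum_def by blast
  then show False using \<open>closure C \<subseteq> K\<close> assms(3,4) by blast
qed

text \<open>If \<open>M - {P, Q}\<close> fell apart into \<open>E1\<close> and \<open>E2\<close>, the closures of \<open>E1\<close> and \<open>E2\<close> would be proper
  closed subsets of \<open>M\<close> meeting only in \<open>P\<close> or \<open>Q\<close>; splitting each of them into a part near \<open>P\<close> and a
  part near \<open>Q\<close> would disconnect \<open>M\<close>.\<close>
lemma irreducible_continuum_minus_ends_connected:
  fixes M :: "'a::metric_space set"
  assumes irr: "irreducible_continuum M P Q" and "P \<noteq> Q"
  shows "connected (M - {P,Q})"
proof (rule ccontr)
  let ?T = "M - {P,Q}"
  have "closed M" using irr by (simp add: irreducible_continuum_def compact_imp_closed)
  assume "\<not> connected ?T"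
  then obtain E1 E2 where E: "closedin (top_of_set ?T) E1" "closedin (top_of_set ?T) E2"
    "?T \<subseteq> E1 \<union> E2" "E1 \<inter> E2 = {}" "E1 \<noteq> {}" "E2 \<noteq> {}"
    unfolding connected_closedin_eq by blast
  have trace: "closure E \<inter> ?T \<subseteq> E" "closure E \<subseteq> M" if closedE: "closedin (top_of_set ?T) E" for E
  proof -
    obtain F where "closed F" "E = ?T \<inter> F" using closedE closedin_closed by blast
    then have "E \<subseteq> F" "E \<subseteq> M" by auto
    then have "closure E \<subseteq> F" "closure E \<subseteq> M"
      using \<open>closed F\<close> \<open>closed M\<close> by (simp_all add: closure_minimal)
    then show "closure E \<inter> ?T \<subseteq> E" "closure E \<subseteq> M"
      using \<open>E = ?T \<inter> F\<close> by auto
  qed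
  have "closure E1 \<noteq> M"
    using trace(1)[OF E(1)] closedin_imp_subset[OF E(2)] E(4,6) by blast
  have "closure E2 \<noteq> M"
    using trace(1)[OF E(2)] closedin_imp_subset[OF E(1)] E(4,5) by blast
  obtain U1 U2
    where U: "closed U1" "closed U2" "closure E1 = U1 \<union> U2" "U1 \<inter> U2 = {}" "P \<notin> U2" "Q \<notin> U1"
    by (rule irreducible_continuum_split_proper_closed[OF irr closed_closure trace(2)[OF E(1)]
          \<open>closure E1 \<noteq> M\<close>])
  obtain V1 V2
    where V: "closed V1" "closed V2" "closure E2 = V1 \<union> V2" "V1 \<inter> V2 = {}" "P \<notin> V2" "Q \<notin> V1"
    by (rule irreducible_continuum_split_proper_closed[OF irr closed_closure trace(2)[OF E(2)]
          \<open>closure E2 \<noteq> M\<close>])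
  have "closure E1 \<inter> closure E2 \<subseteq> {P,Q}"
    using trace[OF E(1)] trace[OF E(2)] E(4) by blast
  then have "(U1 \<union> V1 \<union> {P}) \<inter> (U2 \<union> V2 \<union> {Q}) = {}"
    using U(3-6) V(3-6) \<open>P \<noteq> Q\<close> by blast
  moreover have "M \<subseteq> (U1 \<union> V1 \<union> {P}) \<union> (U2 \<union> V2 \<union> {Q})"
    using E(3) closure_subset[of E1] closure_subset[of E2] U(3) V(3) by blast
  moreover have "P \<in> M" "Q \<in> M" using irr by (auto simp: irreducible_continuum_def)
  moreover have "closed (U1 \<union> V1 \<union> {P})" "closed (U2 \<union> V2 \<union> {Q})"
    using U(1,2) V(1,2) by (simp_all add: closed_Un closed_insert)
  ultimately have "\<exists>A B. closed A \<and> closed B \<and> M \<subseteq> A \<union> B \<and> A \<inter> B \<inter> M = {} \<and>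
      A \<inter> M \<noteq> {} \<and> B \<inter> M \<noteq> {}"
    by (intro exI[of _ "U1 \<union> V1 \<union> {P}"] exI[of _ "U2 \<union> V2 \<union> {Q}"]) auto
  then have "\<not> connected M" by (simp add: connected_closed)
  then show False using irr by (simp add: irreducible_continuum_def)
qed

lemma components_closure_contains_joined_points:
  fixes S :: "'a::euclidean_space set"
  assumes "compact (S \<union> {P,Q})" "connected C" "C \<subseteq> S \<union> {P,Q}" "P \<in> C" "Q \<in> C" "P \<noteq> Q"
  shows "\<exists>K \<in> components S. P \<in> closure K \<and> Q \<in> closure K"
proof -
  obtain M where "M \<subseteq> S \<union> {P,Q}" and irr: "irreducible_continuum M P Q"
    using irreducible_continuum_exists[OF assms(1-5)] by blast
  then have M: "connected M" "P \<in> M" "Q \<in> M" and "M - {P,Q} \<subseteq> S"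
    by (auto simp: irreducible_continuum_def)
  have "x \<in> closure (M - {P,Q})" if "x \<in> M" for x
  proof -
    have "x islimpt M"
      using connected_imp_perfect[OF M(1) that] M(2,3) \<open>P \<noteq> Q\<close> by blast
    moreover have "M = {P,Q} \<union> (M - {P,Q})" using M by blast
    ultimately have "x islimpt (M - {P,Q})"
      by (metis finite.emptyI finite.insertI islimpt_Un_finite)
    then show ?thesis by (simp add: closure_def)
  qed
  then have ends: "P \<in> closure (M - {P,Q})" "Q \<in> closure (M - {P,Q})"
    using M by blast+
  then have "M - {P,Q} \<noteq> {}" by (metis closure_empty empty_iff)
  then obtain x where x: "x \<in> M - {P,Q}" by blast
  have "M - {P,Q} \<subseteq> connected_component_set S x"
    using connected_component_maximal[OF x irreducible_continuum_minus_ends_connected[OF irr \<open>P \<noteq> Q\<close>]]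
      \<open>M - {P,Q} \<subseteq> S\<close> by blast
  then show ?thesis
    using ends closure_mono componentsI[of x S] x \<open>M - {P,Q} \<subseteq> S\<close> by blast
qed

text \<open>Otherwise \<open>Y\<close> splits into closed pieces \<open>X1 \<ni> P\<close> and \<open>X2 \<ni> Q\<close>; each of them meets \<open>F\<close> in at
  most one point, so Janiszewski's theorem, applied twice, shows that \<open>X1 \<union> X2 \<union> F\<close> does not separate
  \<open>a\<close> from \<open>b\<close>.\<close>
lemma Janiszewski_joining_continuum:
  fixes Y F :: "complex set"
  assumes "compact Y" "closed F" "Y \<inter> F \<subseteq> {P,Q}"
    and Y_not_separating: "\<And>X. closed X \<Longrightarrow> X \<subseteq> Y \<Longrightarrow> connected_component (- X) a b"
    and "connected_component (- F) a b"
    and "\<not> connected_component (- (Y \<union> F)) a b"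
  obtains C where "connected C" "C \<subseteq> Y" "P \<in> C" "Q \<in> C"
proof -
  have "\<exists>C. connected C \<and> C \<subseteq> Y \<and> P \<in> C \<and> Q \<in> C"
  proof (rule ccontr)
    assume no_join: "\<nexists>C. connected C \<and> C \<subseteq> Y \<and> P \<in> C \<and> Q \<in> C"
    obtain X1 X2
      where X: "closed X1" "closed X2" "Y = X1 \<union> X2" "X1 \<inter> X2 = {}" "P \<notin> X2" "Q \<notin> X1"
      by (rule compact_separation_of_points[OF \<open>compact Y\<close>]) (use no_join in blast)+
    then have "Y \<inter> X1 = X1" "Y \<inter> X2 = X2" by blast+
    then have "compact X1" "compact X2"
      using compact_Int_closed[OF \<open>compact Y\<close>] X(1,2) by metis+
    have "X2 \<inter> F \<subseteq> {Q}" "X1 \<inter> (X2 \<union> F) \<subseteq> {P}"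
      using assms(3) X by blast+
    then have "connected (X2 \<inter> F)" "connected (X1 \<inter> (X2 \<union> F))"
      using subset_singletonD by fastforce+
    moreover have "connected_component (- X1) a b" "connected_component (- X2) a b"
      using Y_not_separating X(1-3) by blast+
    ultimately have "connected_component (- (X1 \<union> (X2 \<union> F))) a b"
      using Janiszewski[OF \<open>compact X2\<close> \<open>closed F\<close>] assms(5)
        Janiszewski[OF \<open>compact X1\<close> closed_Un[OF \<open>closed X2\<close> \<open>closed F\<close>]] by blast
    then show False
      using assms(6) X(3) by (simp add: Un_assoc)
  qed
  then show ?thesis using that by blast
qed

lemma connected_component_separated_by_frontier:
  assumes "a \<in> A" "b \<notin> A"
  shows "\<not> connected_component (- frontier A) a b"
  using assms connected_Int_frontier[of _ A] unfolding connected_component_def by blast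

lemma joined_through_common_boundary:
  fixes D E U W :: "'a::real_normed_vector set"
  assumes "connected E" "open U" "open W" "u \<in> U" "w \<in> W"
    and "u \<in> closure D" "u \<in> closure E" "w \<in> closure D" "w \<in> closure E"
  obtains a b where "a \<in> U \<inter> D" "b \<in> W \<inter> D" "connected_component (U \<union> E \<union> W) a b"
proof -
  have meets: "ball x \<rho> \<inter> X \<noteq> {}" if "x \<in> closure X" "\<rho> > 0" for x \<rho> and X :: "'a set"
    using that open_Int_closure_eq_empty[OF open_ball, of x \<rho> X] centre_in_ball by blast
  obtain r where "r > 0" "ball u r \<subseteq> U"
    using assms(2,4) open_contains_ball by blast
  obtain r' where "r' > 0" "ball w r' \<subseteq> W"
    using assms(3,5) open_contains_ball by blast
  obtain a b where ab: "a \<in> ball u r \<inter> D" "b \<in> ball w r' \<inter> D"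
    using meets[OF assms(6) \<open>r > 0\<close>] meets[OF assms(8) \<open>r' > 0\<close>] by blast
  have "connected (ball u r \<union> E)"
    using connected_Un[OF connected_ball assms(1) meets[OF assms(7) \<open>r > 0\<close>]] .
  then have "connected (ball u r \<union> E \<union> ball w r')"
    using connected_Un[OF _ connected_ball] meets[OF assms(9) \<open>r' > 0\<close>] by blast
  moreover have "ball u r \<union> E \<union> ball w r' \<subseteq> U \<union> E \<union> W"
    using \<open>ball u r \<subseteq> U\<close> \<open>ball w r' \<subseteq> W\<close> by blast
  ultimately have "connected_component (U \<union> E \<union> W) a b"
    using ab unfolding connected_component_def by blast
  then show ?thesis
    using that ab \<open>ball u r \<subseteq> U\<close> \<open>ball w r' \<subseteq> W\<close> by blast
qed

lemma disjoint_frontier_Int_if_locally_inside: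
  assumes "open \<Omega>" "open U" "U \<inter> (closure \<Omega> - A) = {}"
  shows "U \<inter> (frontier A \<inter> \<Omega>) = {}"
proof -
  have "U \<inter> \<Omega> \<subseteq> A"
    using assms(3) closure_subset[of \<Omega>] by blast
  then have "U \<inter> \<Omega> \<subseteq> interior A"
    using assms(1,2) by (simp add: interior_maximal open_Int)
  then show ?thesis unfolding frontier_def by blast
qed

lemma compact_frontier_Int_insert_ends:
  fixes \<Omega> A :: "'a::heine_borel set"
  assumes "open \<Omega>" "bounded \<Omega>" "closed A"
    and locally_inside: "\<And>z. z \<in> (A \<inter> frontier \<Omega>) - {P, Q} \<Longrightarrow>
            \<exists>U. open U \<and> z \<in> U \<and> U \<inter> (closure \<Omega> - A) = {}"
  shows "compact (frontier A \<inter> \<Omega> \<union> {P,Q})"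
proof -
  let ?S = "frontier A \<inter> \<Omega>"
  have "closure ?S \<subseteq> ?S \<union> {P,Q}"
  proof
    fix x assume x: "x \<in> closure ?S"
    have "closure ?S \<subseteq> frontier A" "closure ?S \<subseteq> closure \<Omega>"
      by (simp_all add: closure_minimal closure_mono)
    then have "x \<in> frontier A" "x \<in> closure \<Omega>"
      using x by blast+
    moreover have "x \<notin> A \<inter> frontier \<Omega> - {P,Q}"
    proof
      assume "x \<in> A \<inter> frontier \<Omega> - {P,Q}"
      then obtain U where "open U" "x \<in> U" "U \<inter> (closure \<Omega> - A) = {}"
        using locally_inside by blast
      then have "U \<inter> ?S = {}"
        using disjoint_frontier_Int_if_locally_inside[OF \<open>open \<Omega>\<close>] by blast
      then have "U \<inter> closure ?S = {}"
        using open_Int_closure_eq_empty[OF \<open>open U\<close>] by blast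
      then show False
        using x \<open>x \<in> U\<close> by blast
    qed
    moreover have "frontier \<Omega> = closure \<Omega> - \<Omega>"
      using \<open>open \<Omega>\<close> by (simp add: frontier_def interior_open)
    ultimately show "x \<in> ?S \<union> {P,Q}"
      using frontier_subset_closed[OF \<open>closed A\<close>] by blast
  qed
  then have "?S \<union> {P,Q} = closure ?S \<union> {P,Q}"
    using closure_subset[of ?S] by blast
  then have "closed (?S \<union> {P,Q})"
    by (simp add: closed_Un closed_insert)
  moreover have "bounded (\<Omega> \<union> {P,Q})"
    using \<open>bounded \<Omega>\<close> by simp
  then have "bounded (?S \<union> {P,Q})"
    by (rule bounded_subset) blast
  ultimately show ?thesis
    by (simp add: compact_eq_bounded_closed)
qed

lemma jordan_domain_open_connected_bounded:
  assumes "jordan_domain \<Omega>"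
  shows "open \<Omega>" "connected \<Omega>" "bounded \<Omega>"
  using assms Jordan_inside_outside unfolding jordan_domain_def by blast+

lemma jordan_domain_exterior:
  assumes "jordan_domain \<Omega>"
  obtains E where "open E" "connected E" "frontier E = frontier \<Omega>" "E \<inter> closure \<Omega> = {}"
proof -
  obtain g where g: "simple_path g" "pathfinish g = pathstart g" "\<Omega> = inside (path_image g)"
    using assms unfolding jordan_domain_def by blast
  let ?E = "outside (path_image g)"
  have "open ?E" "connected ?E" and fr: "frontier ?E = frontier \<Omega>" and "\<Omega> \<inter> ?E = {}"
    using Jordan_inside_outside[OF g(1,2)] unfolding g(3) by auto
  moreover have "frontier ?E \<inter> ?E = {}"
    using \<open>open ?E\<close> by (simp add: frontier_disjoint_eq)
  then have "?E \<inter> closure \<Omega> = {}"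
    unfolding closure_Un_frontier[of \<Omega>] using fr \<open>\<Omega> \<inter> ?E = {}\<close> by auto
  ultimately show ?thesis using that by blast
qed

lemma jordan_domain_joined_around:
  assumes "jordan_domain \<Omega>" "open U" "open W" "u \<in> U \<inter> frontier \<Omega>" "w \<in> W \<inter> frontier \<Omega>"
  obtains a b where "a \<in> U \<inter> \<Omega>" "b \<in> W \<inter> \<Omega>"
    "\<And>X. X \<subseteq> closure \<Omega> - (U \<union> W) \<Longrightarrow> connected_component (- X) a b"
proof -
  obtain E where "open E" "connected E" "frontier E = frontier \<Omega>" "E \<inter> closure \<Omega> = {}"
    by (rule jordan_domain_exterior[OF assms(1)])
  have "u \<in> closure \<Omega>" "u \<in> closure E" "w \<in> closure \<Omega>" "w \<in> closure E"
    using assms(4,5) \<open>frontier E = frontier \<Omega>\<close> by (auto simp: frontier_def)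
  moreover have "u \<in> U" "w \<in> W"
    using assms(4,5) by blast+
  ultimately obtain a b where ab: "a \<in> U \<inter> \<Omega>" "b \<in> W \<inter> \<Omega>"
    and joined: "connected_component (U \<union> E \<union> W) a b"
    using joined_through_common_boundary[OF \<open>connected E\<close> assms(2,3)] by metis
  show ?thesis
  proof (rule that[OF ab])
    fix X assume "X \<subseteq> closure \<Omega> - (U \<union> W)"
    then have "U \<union> E \<union> W \<subseteq> - X"
      using \<open>E \<inter> closure \<Omega> = {}\<close> by blast
    then show "connected_component (- X) a b"
      using connected_component_of_subset[OF joined] by blast
  qed
qed

lemma jordan_domain_frontier_not_arc:
  assumes "jordan_domain \<Omega>" "arc \<gamma>"
  shows "path_image \<gamma> \<noteq> frontier \<Omega>"
proof -
  obtain g where g: "simple_path g" "pathfinish g = pathstart g" "\<Omega> = inside (path_image g)"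
    using assms unfolding jordan_domain_def by blast
  then have "frontier \<Omega> = path_image g"
    using Jordan_inside_outside by blast
  moreover have "\<not> connected (- path_image g)"
    using Jordan_disconnected[OF g(1,2)] .
  moreover have "connected (- path_image \<gamma>)"
    using connected_arc_complement[OF assms(2)] by simp
  ultimately show ?thesis by auto
qed

lemma arc_image_minus_ends_nonempty:
  assumes "arc \<gamma>"
  shows "path_image \<gamma> - {pathstart \<gamma>, pathfinish \<gamma>} \<noteq> {}"
proof -
  have "\<gamma> (1/2) \<noteq> \<gamma> 0" "\<gamma> (1/2) \<noteq> \<gamma> 1"
    using assms unfolding arc_def inj_on_def by force+
  moreover have "\<gamma> (1/2) \<in> path_image \<gamma>"
    unfolding path_image_def by simp
  ultimately show ?thesis
    unfolding pathstart_def pathfinish_def by blast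
qed

lemma points_on_both_sides_not_separated:
  fixes \<Omega> A :: "complex set"
  assumes "jordan_domain \<Omega>" "closed A" "arc \<gamma>" "path_image \<gamma> = A \<inter> frontier \<Omega>"
    and "pathstart \<gamma> = P" "pathfinish \<gamma> = Q"
    and locally_inside: "\<And>z. z \<in> (A \<inter> frontier \<Omega>) - {P, Q} \<Longrightarrow>
            \<exists>U. open U \<and> z \<in> U \<and> U \<inter> (closure \<Omega> - A) = {}"
  obtains a b where "a \<in> A \<inter> \<Omega>" "b \<in> \<Omega> - A"
    "\<And>X. X \<subseteq> frontier A \<inter> \<Omega> \<union> {P,Q} \<Longrightarrow> connected_component (- X) a b"
proof -
  have ends: "P \<in> A \<inter> frontier \<Omega>" "Q \<in> A \<inter> frontier \<Omega>"
    using pathstart_in_path_image[of \<gamma>] pathfinish_in_path_image[of \<gamma>] unfolding assms(4-6) by auto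
  obtain z where z: "z \<in> A \<inter> frontier \<Omega> - {P,Q}"
    using arc_image_minus_ends_nonempty[OF assms(3)] unfolding assms(4-6) by blast
  then obtain U where U: "open U" "z \<in> U" "U \<inter> (closure \<Omega> - A) = {}"
    using locally_inside by blast
  then have "open (U - {P,Q})"
    by (meson finite.emptyI finite.insertI finite_imp_closed open_Diff)
  moreover obtain s where "s \<in> frontier \<Omega>" "s \<notin> A"
    using jordan_domain_frontier_not_arc[OF assms(1,3)] assms(4) by blast
  ultimately obtain a b where ab: "a \<in> (U - {P,Q}) \<inter> \<Omega>" "b \<in> - A \<inter> \<Omega>"
    and joined: "\<And>X. X \<subseteq> closure \<Omega> - ((U - {P,Q}) \<union> - A) \<Longrightarrow> connected_component (- X) a b"
    using jordan_domain_joined_around[OF assms(1) _ open_Compl[OF \<open>closed A\<close>], of "U - {P,Q}" z s] z U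
    by blast
  have "U \<inter> (frontier A \<inter> \<Omega>) = {}"
    using disjoint_frontier_Int_if_locally_inside jordan_domain_open_connected_bounded(1)[OF assms(1)] U
    by blast
  then have Y: "frontier A \<inter> \<Omega> \<union> {P,Q} \<subseteq> closure \<Omega> - ((U - {P,Q}) \<union> - A)"
    using ends frontier_subset_closed[OF \<open>closed A\<close>] closure_subset[of \<Omega>] frontier_closures[of \<Omega>]
    by blast
  show ?thesis
  proof (rule that)
    show "a \<in> A \<inter> \<Omega>"
      using ab U(3) closure_subset[of \<Omega>] by blast
    show "b \<in> \<Omega> - A"
      using ab by blast
    fix X assume "X \<subseteq> frontier A \<inter> \<Omega> \<union> {P,Q}"
    then show "connected_component (- X) a b"
      using joined Y by blast
  qed
qed

theorem lemma4p5:
  fixes \<Omega> A :: "complex set" and \<gamma> :: "real \<Rightarrow> complex" and P Q :: complex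
  assumes "jordan_domain \<Omega>"
    and "closed A" and "connected A" and "A \<subseteq> closure \<Omega>"
    and "arc \<gamma>" and "path_image \<gamma> = A \<inter> frontier \<Omega>"
    and "pathstart \<gamma> = P" and "pathfinish \<gamma> = Q"
    and "\<And>z. z \<in> (A \<inter> frontier \<Omega>) - {P, Q} \<Longrightarrow>
            \<exists>U. open U \<and> z \<in> U \<and> U \<inter> (closure \<Omega> - A) = {}"
  shows "\<exists>C \<in> components (frontier A \<inter> \<Omega>). P \<in> closure C \<and> Q \<in> closure C"
proof -
  let ?Y = "frontier A \<inter> \<Omega> \<union> {P,Q}"
  note \<Omega> = jordan_domain_open_connected_bounded[OF assms(1)]
  obtain a b where ab: "a \<in> A \<inter> \<Omega>" "b \<in> \<Omega> - A"
    and Y_not_separating: "\<And>X. X \<subseteq> ?Y \<Longrightarrow> connected_component (- X) a b"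
    using points_on_both_sides_not_separated[OF assms(1,2,5-9)] by blast
  have "connected_component (- (- \<Omega>)) a b"
    using ab \<Omega>(2) unfolding connected_component_def by blast
  moreover have "\<not> connected_component (- (?Y \<union> - \<Omega>)) a b"
    using connected_component_separated_by_frontier[of a A b] ab
      connected_component_of_subset[of "- (?Y \<union> - \<Omega>)" a b "- frontier A"] by blast
  moreover have "compact ?Y"
    using compact_frontier_Int_insert_ends[OF \<Omega>(1,3) assms(2,9)] .
  ultimately obtain C where "connected C" "C \<subseteq> ?Y" "P \<in> C" "Q \<in> C"
    using Janiszewski_joining_continuum[of ?Y "- \<Omega>" P Q a b] \<open>open \<Omega>\<close> Y_not_separating by blast
  moreover have "P \<noteq> Q"
    using arc_distinct_ends[OF assms(5)] assms(7,8) by auto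
  ultimately show ?thesis
    using components_closure_contains_joined_points[OF \<open>compact ?Y\<close>] by blast
qed

end
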